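(* Let $0<p<1$, $q=0$ and $0<\theta<1$. Let \[ m_{\mathrm{COMP}}=\min_{\alpha,d}\max\left\{\frac{\theta}{1-\theta}\frac{1}{d\,D_{\mathrm{KL}}(\alpha\|0)},\ \frac{1}{1-\theta}\frac{1}{d\,D_{\mathrm{KL}}(\alpha\|e^{-d}(1-p))}\right\}k\log(n/k), \] the minimum over $d>0$ and $\alpha\in(0,e^{-d}(1-p))$, and with $w=e^{-d}p+1-e^{-d}$, \[ m_{\mathrm{DD}}=\min_{\alpha,\beta,d}\max\{c_1(\alpha,d),c_2(\alpha,d),c_3(\beta,d),c_4(\alpha,\beta,d)\}\,k\log(n/k), \] the minimum over $d>0$, $\alpha\in(0,e^{-d}(1-p))$, $\beta\in(0,e^{-d})$, where $c_1(\alpha,d)=\frac{\theta}{1-\theta}\frac{1}{d\,D_{\mathrm{KL}}(\alpha\|0)}$, $c_2(\alpha,d)=\frac{1}{d\,D_{\mathrm{KL}}(\alpha\|1-w)}$, $c_3(\beta,d)=\frac{\theta}{1-\theta}\frac{1}{d\,D_{\mathrm{KL}}(\beta\|e^{-d})}$ and \[ c_4(\alpha,\beta,d)=\max_{1-\alpha\le z\le1}\left\{\frac{1}{1-\theta}\frac{1}{d\Big(D_{\mathrm{KL}}(z\|w)+\mathbf 1\big\{\beta>\tfrac{ze^{-d}p}{w}\big\}\,z\,D_{\mathrm{KL}}\big(\tfrac\beta z\,\big\|\,\tfrac{e^{-d}p}{w}\big)\Big)}\right\}. \] Then $m_{\mathrm{COMP}}\ge m_{\mathrm{DD}}$.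
   Context: $\log$ is the natural logarithm; $D_{\mathrm{KL}}(r\|s)=r\log(r/s)+(1-r)\log\frac{1-r}{1-s}$, extended by continuity (possibly to $+\infty$) at $r$ or $s\in\{0,1\}$; $1/\infty$ is read as $0$; $\mathbf 1\{\cdot\}$ is the indicator function; $n,k$ are positive integers with $k<n$. (These quantities are the test-number bounds for noisy COMP and noisy DD with constant-column design on the reverse Z channel, i.e. false-positive probability $p$ and false-negative probability $q=0$.) *)

theory Defs
  imports "HOL-Analysis.Analysis"
begin

text \<open>One summand r log(r/s) of the binary KL divergence, extended by continuity
  to r = 0 (value 0) and to r > 0, s = 0 (value +infinity). Arguments are in [0,1].\<close>
definition kl_term :: "real \<Rightarrow> real \<Rightarrow> ereal" where
  "kl_term r s = (if r = 0 then 0 else if s = 0 then \<infinity> else ereal (r * ln (r / s)))"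

definition DKL :: "real \<Rightarrow> real \<Rightarrow> ereal" where
  "DKL r s = kl_term r s + kl_term (1 - r) (1 - s)"

text \<open>Test-number bound for noisy COMP (reverse Z channel, q = 0).
  Division is in ereal, so 1/infinity = 0 and 1/0 = infinity.\<close>
definition m_COMP :: "nat \<Rightarrow> nat \<Rightarrow> real \<Rightarrow> real \<Rightarrow> ereal" where
  "m_COMP n k p \<theta> =
     (INF (\<alpha>, d) \<in> {(\<alpha>, d). 0 < d \<and> 0 < \<alpha> \<and> \<alpha> < exp (- d) * (1 - p)}.
        max (ereal (\<theta> / (1 - \<theta>)) * (1 / (ereal d * DKL \<alpha> 0)))
            (ereal (1 / (1 - \<theta>)) * (1 / (ereal d * DKL \<alpha> (exp (- d) * (1 - p))))))
     * ereal (real k * ln (real n / real k))"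

definition w_DD :: "real \<Rightarrow> real \<Rightarrow> real" where
  "w_DD p d = exp (- d) * p + 1 - exp (- d)"

definition c1 :: "real \<Rightarrow> real \<Rightarrow> real \<Rightarrow> ereal" where
  "c1 \<theta> \<alpha> d = ereal (\<theta> / (1 - \<theta>)) * (1 / (ereal d * DKL \<alpha> 0))"

definition c2 :: "real \<Rightarrow> real \<Rightarrow> real \<Rightarrow> ereal" where
  "c2 p \<alpha> d = 1 / (ereal d * DKL \<alpha> (1 - w_DD p d))"

definition c3 :: "real \<Rightarrow> real \<Rightarrow> real \<Rightarrow> ereal" where
  "c3 \<theta> \<beta> d = ereal (\<theta> / (1 - \<theta>)) * (1 / (ereal d * DKL \<beta> (exp (- d))))"

definition c4 :: "real \<Rightarrow> real \<Rightarrow> real \<Rightarrow> real \<Rightarrow> real \<Rightarrow> ereal" where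
  "c4 p \<theta> \<alpha> \<beta> d =
     (SUP z \<in> {1 - \<alpha> .. 1}.
        ereal (1 / (1 - \<theta>)) *
        (1 / (ereal d *
              (DKL z (w_DD p d) +
               (if \<beta> > z * exp (- d) * p / w_DD p d
                then ereal z * DKL (\<beta> / z) (exp (- d) * p / w_DD p d)
                else 0)))))"

definition m_DD :: "nat \<Rightarrow> nat \<Rightarrow> real \<Rightarrow> real \<Rightarrow> ereal" where
  "m_DD n k p \<theta> =
     (INF (\<alpha>, \<beta>, d) \<in> {(\<alpha>, \<beta>, d). 0 < d \<and> 0 < \<alpha> \<and> \<alpha> < exp (- d) * (1 - p)
                                   \<and> 0 < \<beta> \<and> \<beta> < exp (- d)}.
        max (max (c1 \<theta> \<alpha> d) (c2 p \<alpha> d)) (max (c3 \<theta> \<beta> d) (c4 p \<theta> \<alpha> \<beta> d)))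
     * ereal (real k * ln (real n / real k))"

end

theory Submission
  imports Defs "HOL-Real_Asymp.Real_Asymp"
begin

text \<open>Every COMP parameter pair \<open>(\<alpha>, d)\<close> is matched by a DD triple \<open>(\<alpha>, \<beta>, d)\<close>
  whose objective is no larger. Put \<open>s = e\<^sup>-\<^sup>d (1 - p)\<close> and \<open>w = 1 - s\<close>. Since
  \<open>D\<^sub>K\<^sub>L(\<alpha>\<parallel>0) = \<infinity>\<close>, the COMP objective is \<open>1 / ((1 - \<theta>) d D\<^sub>K\<^sub>L(\<alpha>\<parallel>s))\<close>.
  Now \<open>D\<^sub>K\<^sub>L(\<alpha>\<parallel>s) < -log (1 - s) \<le> -log (1 - e\<^sup>-\<^sup>d)\<close>, and the right-hand side is the
  limit of \<open>D\<^sub>K\<^sub>L(\<beta>\<parallel>e\<^sup>-\<^sup>d)\<close> as \<open>\<beta> \<rightarrow> 0\<close>; so a small \<open>\<beta>\<close> makes \<open>c3\<close> smaller than the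
  COMP objective and switches off the indicator in \<open>c4\<close> for all \<open>z \<ge> 1 - \<alpha>\<close>. Then \<open>c1 = 0\<close>,
  \<open>c2\<close> is smaller because \<open>1 / (1 - \<theta>) \<ge> 1\<close>, and \<open>c4\<close> is smaller because
  \<open>D\<^sub>K\<^sub>L(z\<parallel>w) \<ge> D\<^sub>K\<^sub>L(1 - \<alpha>\<parallel>w) = D\<^sub>K\<^sub>L(\<alpha>\<parallel>s)\<close> for \<open>z \<ge> 1 - \<alpha> > w\<close>.\<close>

definition binary_kl :: "real \<Rightarrow> real \<Rightarrow> real" where
  "binary_kl r s = r * ln (r / s) + (1 - r) * ln ((1 - r) / (1 - s))"

lemma DKL_eq_binary_kl:
  assumes "0 < r" "r \<le> 1" "0 < s" "s < 1"
  shows "DKL r s = ereal (binary_kl r s)"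
  using assms by (cases "r = 1") (simp_all add: DKL_def kl_term_def binary_kl_def)

lemma DKL_zero_right: "0 < r \<Longrightarrow> r < 1 \<Longrightarrow> DKL r 0 = \<infinity>"
  by (simp add: DKL_def kl_term_def)

lemma binary_kl_swap: "binary_kl (1 - r) (1 - s) = binary_kl r s"
  by (simp add: binary_kl_def)

lemma ln_less_minus_one:
  fixes x :: real
  assumes "0 < x" "x \<noteq> 1"
  shows "ln x < x - 1"
proof -
  define y where "y = sqrt x"
  have y: "0 < y" "y \<noteq> 1" "y * y = x"
    using assms by (auto simp: y_def)
  have "ln x = 2 * ln y"
    using assms by (simp add: y_def ln_sqrt)
  moreover have "ln y \<le> y - 1"
    using y by (simp add: ln_le_minus_one)
  moreover have "0 < (y - 1)\<^sup>2"
    using y by simp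
  ultimately show ?thesis
    using y by (simp add: power2_eq_square algebra_simps)
qed

lemma binary_kl_pos:
  assumes "0 < r" "r < 1" "0 < s" "s < 1" "r \<noteq> s"
  shows "0 < binary_kl r s"
proof -
  have "r * ln (s / r) < r * (s / r - 1)"
    using assms by (intro mult_strict_left_mono ln_less_minus_one) auto
  moreover have "ln (r / s) = - ln (s / r)" "r * (s / r - 1) = s - r"
    using assms by (simp_all add: ln_div field_simps)
  ultimately have first: "r - s < r * ln (r / s)"
    by simp
  have "(1 - r) * ln ((1 - s) / (1 - r)) \<le> (1 - r) * ((1 - s) / (1 - r) - 1)"
    using assms by (intro mult_left_mono ln_le_minus_one) auto
  moreover have "ln ((1 - r) / (1 - s)) = - ln ((1 - s) / (1 - r))"
      "(1 - r) * ((1 - s) / (1 - r) - 1) = r - s"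
    using assms by (simp_all add: ln_div field_simps)
  ultimately have second: "s - r \<le> (1 - r) * ln ((1 - r) / (1 - s))"
    by simp
  show ?thesis
    using first second by (simp add: binary_kl_def)
qed

lemma binary_kl_less_minus_ln:
  assumes "0 < r" "r < s" "s < 1"
  shows "binary_kl r s < - ln (1 - s)"
proof -
  have "ln (r * (1 - s) / s) = ln r + ln (1 - s) - ln s"
    using assms by (simp add: ln_div ln_mult)
  then have "binary_kl r s + ln (1 - s) = r * ln (r * (1 - s) / s) + (1 - r) * ln (1 - r)"
    using assms by (simp add: binary_kl_def ln_div algebra_simps)
  moreover have "r * (1 - s) < s"
    using assms mult_left_le[of "1 - s" r] by linarith
  then have "r * ln (r * (1 - s) / s) < 0"
    using assms by (intro mult_pos_neg) auto
  moreover have "(1 - r) * ln (1 - r) \<le> 0"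
    using assms by (intro mult_nonneg_nonpos) auto
  ultimately show ?thesis
    by linarith
qed

lemma has_real_derivative_binary_kl:
  assumes "0 < x" "x < 1" "0 < w" "w < 1"
  shows "((\<lambda>z. binary_kl z w) has_real_derivative ln (x / w) - ln ((1 - x) / (1 - w))) (at x)"
  unfolding binary_kl_def using assms
  by (auto intro!: derivative_eq_intros simp: divide_simps) (simp_all add: algebra_simps)

lemma binary_kl_mono_left_less_one:
  assumes "0 < w" "w \<le> a" "a \<le> b" "b < 1"
  shows "binary_kl a w \<le> binary_kl b w"
proof (rule DERIV_nonneg_imp_increasing_open[OF \<open>a \<le> b\<close>])
  fix x assume "a < x" "x < b"
  with assms have "0 \<le> ln (x / w)" "ln ((1 - x) / (1 - w)) \<le> 0"
    by simp_all
  then have "0 \<le> ln (x / w) - ln ((1 - x) / (1 - w))"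
    by simp
  moreover have "((\<lambda>z. binary_kl z w) has_real_derivative ln (x / w) - ln ((1 - x) / (1 - w))) (at x)"
    using \<open>a < x\<close> \<open>x < b\<close> assms by (intro has_real_derivative_binary_kl) auto
  ultimately show "\<exists>y. ((\<lambda>z. binary_kl z w) has_real_derivative y) (at x) \<and> 0 \<le> y"
    by blast
next
  show "continuous_on {a..b} (\<lambda>z. binary_kl z w)"
    unfolding binary_kl_def using assms by (intro continuous_intros) auto
qed

lemma binary_kl_mono_left:
  assumes "0 < w" "w \<le> a" "a \<le> b" "b \<le> 1"
  shows "binary_kl a w \<le> binary_kl b w"
proof (cases "b < 1")
  case True
  with assms show ?thesis
    by (intro binary_kl_mono_left_less_one)
next
  case False
  then have "b = 1" using assms by simp
  show ?thesis
  proof (cases "a = 1")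
    case False
    define a' where "a' = (a + 1) / 2"
    have "binary_kl a w \<le> binary_kl a' w"
      using assms False by (intro binary_kl_mono_left_less_one) (auto simp: a'_def)
    also have "\<dots> = binary_kl (1 - a') (1 - w)"
      by (simp add: binary_kl_swap)
    also have "\<dots> < - ln (1 - (1 - w))"
      using assms False by (intro binary_kl_less_minus_ln) (auto simp: a'_def)
    also have "\<dots> = binary_kl b w"
      using \<open>b = 1\<close> assms by (simp add: binary_kl_def ln_div)
    finally show ?thesis by simp
  qed (use \<open>b = 1\<close> in simp)
qed

lemma binary_kl_tendsto_at_right_0:
  assumes "0 < c" "c < 1"
  shows "((\<lambda>x. binary_kl x c) \<longlongrightarrow> - ln (1 - c)) (at_right 0)"
proof -
  have "((\<lambda>x::real. x * ln x) \<longlongrightarrow> 0) (at_right 0)"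
    by real_asymp
  then have "((\<lambda>x. x * ln x - x * ln c + (1 - x) * ln ((1 - x) / (1 - c)))
               \<longlongrightarrow> 0 - 0 * ln c + (1 - 0) * ln ((1 - 0) / (1 - c))) (at_right 0)"
    using assms by (intro tendsto_intros) auto
  also have "0 - 0 * ln c + (1 - 0) * ln ((1 - 0) / (1 - c)) = - ln (1 - c)"
    using assms by (simp add: ln_div)
  finally have lim: "((\<lambda>x. x * ln x - x * ln c + (1 - x) * ln ((1 - x) / (1 - c)))
                       \<longlongrightarrow> - ln (1 - c)) (at_right 0)" .
  have "\<forall>\<^sub>F x in at_right 0.
      x * ln x - x * ln c + (1 - x) * ln ((1 - x) / (1 - c)) = binary_kl x c"
    using eventually_at_right_less[of 0]
    by eventually_elim (use assms in \<open>simp add: binary_kl_def ln_div algebra_simps\<close>)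
  then show ?thesis
    using lim by (rule tendsto_cong[THEN iffD1])
qed

lemma w_DD_eq: "w_DD p d = 1 - exp (- d) * (1 - p)"
  by (simp add: w_DD_def algebra_simps)

lemma COMP_objective_eq:
  assumes "\<theta> < 1" "0 < d" "0 < \<alpha>" "\<alpha> < s" "s < 1"
  shows "max (ereal (\<theta> / (1 - \<theta>)) * (1 / (ereal d * DKL \<alpha> 0)))
             (ereal (1 / (1 - \<theta>)) * (1 / (ereal d * DKL \<alpha> s)))
         = ereal (1 / (1 - \<theta>) / (d * binary_kl \<alpha> s))"
proof -
  have "0 < binary_kl \<alpha> s"
    using assms by (intro binary_kl_pos) auto
  then show ?thesis
    using assms by (simp add: DKL_zero_right DKL_eq_binary_kl one_ereal_def)
qed

lemma c4_le_COMP_objective: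
  assumes "0 \<le> p" "\<theta> < 1" "0 < d" "0 < \<alpha>" "\<alpha> < exp (- d) * (1 - p)"
    and \<beta>: "\<beta> \<le> (1 - \<alpha>) * exp (- d) * p / w_DD p d"
  shows "c4 p \<theta> \<alpha> \<beta> d \<le> ereal (1 / (1 - \<theta>) / (d * binary_kl \<alpha> (exp (- d) * (1 - p))))"
  unfolding c4_def
proof (rule SUP_least, goal_cases)
  case (1 z)
  define s where "s = exp (- d) * (1 - p)"
  define w where "w = w_DD p d"
  have "s \<le> exp (- d)" "exp (- d) < 1"
    using assms by (simp_all add: s_def mult_left_le)
  then have s: "0 < s" "s < 1"
    using assms(4,5) unfolding s_def by linarith+
  have w: "w = 1 - s"
    by (simp add: w_def s_def w_DD_eq)
  have D: "0 < binary_kl \<alpha> s"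
    using assms s by (intro binary_kl_pos) (auto simp: s_def)
  have z: "1 - \<alpha> \<le> z" "z \<le> 1"
    using 1 by auto
  have "(1 - \<alpha>) * exp (- d) * p / w \<le> z * exp (- d) * p / w"
    using z assms s w by (intro divide_right_mono mult_right_mono) auto
  then have no_indicator: "\<not> \<beta> > z * exp (- d) * p / w_DD p d"
    using \<beta> by (simp add: w_def)
  have "binary_kl \<alpha> s = binary_kl (1 - \<alpha>) w"
    by (simp add: w binary_kl_swap)
  also have "\<dots> \<le> binary_kl z w"
    using z assms s w by (intro binary_kl_mono_left) (auto simp: s_def)
  finally have G: "binary_kl \<alpha> s \<le> binary_kl z w" .
  have "DKL z (w_DD p d) = ereal (binary_kl z w)"
    unfolding w_def[symmetric] using z assms s w by (intro DKL_eq_binary_kl) (auto simp: s_def)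
  moreover have "1 / (1 - \<theta>) / (d * binary_kl z w) \<le> 1 / (1 - \<theta>) / (d * binary_kl \<alpha> s)"
    using assms D G by (intro divide_left_mono mult_left_mono mult_pos_pos) auto
  ultimately show ?case
    using no_indicator assms D G by (simp add: one_ereal_def s_def)
qed

lemma DD_objective_le_COMP_objective:
  assumes p: "0 < p" "p < 1" and \<theta>: "0 < \<theta>" "\<theta> < 1"
    and d: "0 < d" and \<alpha>: "0 < \<alpha>" "\<alpha> < exp (- d) * (1 - p)"
    and \<beta>: "0 < \<beta>" "\<beta> < exp (- d)" "\<beta> \<le> (1 - \<alpha>) * exp (- d) * p / w_DD p d"
    and K: "binary_kl \<alpha> (exp (- d) * (1 - p)) < binary_kl \<beta> (exp (- d))"
  shows "max (max (c1 \<theta> \<alpha> d) (c2 p \<alpha> d)) (max (c3 \<theta> \<beta> d) (c4 p \<theta> \<alpha> \<beta> d))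
       \<le> max (ereal (\<theta> / (1 - \<theta>)) * (1 / (ereal d * DKL \<alpha> 0)))
             (ereal (1 / (1 - \<theta>)) * (1 / (ereal d * DKL \<alpha> (exp (- d) * (1 - p)))))"
proof -
  define s where "s = exp (- d) * (1 - p)"
  define D where "D = binary_kl \<alpha> s"
  define V where "V = 1 / (1 - \<theta>) / (d * D)"
  have "s \<le> exp (- d)" and c: "exp (- d) < 1"
    using d p by (simp_all add: s_def mult_left_le)
  then have s: "\<alpha> < s" "s < 1"
    using \<alpha> unfolding s_def by linarith+
  have D: "0 < D"
    unfolding D_def using \<alpha> s by (intro binary_kl_pos) auto
  have "c1 \<theta> \<alpha> d = 0"
    using \<alpha> s d by (simp add: c1_def DKL_zero_right)
  moreover have "c2 p \<alpha> d \<le> ereal V"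
  proof -
    have "c2 p \<alpha> d = ereal (1 / (d * D))"
      using \<alpha> s d D by (simp add: c2_def w_DD_eq DKL_eq_binary_kl one_ereal_def D_def s_def)
    also have "\<dots> \<le> ereal V"
      using \<theta> d D by (simp add: V_def field_simps)
    finally show ?thesis .
  qed
  moreover have "c3 \<theta> \<beta> d \<le> ereal V"
  proof -
    have "DKL \<beta> (exp (- d)) = ereal (binary_kl \<beta> (exp (- d)))"
      using \<beta>(1,2) c exp_gt_zero[of "- d"] by (intro DKL_eq_binary_kl) linarith+
    then have "c3 \<theta> \<beta> d = ereal (\<theta> / (1 - \<theta>) / (d * binary_kl \<beta> (exp (- d))))"
      using d D K by (simp add: c3_def one_ereal_def D_def s_def)
    also have "\<dots> \<le> ereal V"
      using \<theta> d D K by (simp add: V_def D_def s_def frac_le mult_strict_left_mono)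
    finally show ?thesis .
  qed
  moreover have "c4 p \<theta> \<alpha> \<beta> d \<le> ereal V"
    using c4_le_COMP_objective[of p \<theta> d \<alpha> \<beta>] p \<theta> d \<alpha> \<beta>
    by (simp add: V_def D_def s_def)
  moreover have "0 \<le> ereal V"
    using \<theta> d D by (simp add: V_def)
  ultimately show ?thesis
    using COMP_objective_eq[of \<theta> d \<alpha> s] \<theta> d \<alpha> s
    by (simp add: V_def D_def s_def)
qed

lemma exists_DD_objective_le_COMP_objective:
  assumes p: "0 < p" "p < 1" and \<theta>: "0 < \<theta>" "\<theta> < 1"
    and d: "0 < d" and \<alpha>: "0 < \<alpha>" "\<alpha> < exp (- d) * (1 - p)"
  shows "\<exists>\<beta>. 0 < \<beta> \<and> \<beta> < exp (- d) \<and>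
    max (max (c1 \<theta> \<alpha> d) (c2 p \<alpha> d)) (max (c3 \<theta> \<beta> d) (c4 p \<theta> \<alpha> \<beta> d))
       \<le> max (ereal (\<theta> / (1 - \<theta>)) * (1 / (ereal d * DKL \<alpha> 0)))
             (ereal (1 / (1 - \<theta>)) * (1 / (ereal d * DKL \<alpha> (exp (- d) * (1 - p)))))"
proof -
  define c where "c = exp (- d)"
  define s where "s = c * (1 - p)"
  define B where "B = (1 - \<alpha>) * c * p / w_DD p d"
  have c: "0 < c" "c < 1"
    using d by (simp_all add: c_def)
  have "s \<le> c"
    using c p by (simp add: s_def mult_left_le)
  then have s: "\<alpha> < s" "s < 1"
    using \<alpha> c unfolding s_def c_def by linarith+
  have "binary_kl \<alpha> s < - ln (1 - s)"
    using \<alpha> s by (intro binary_kl_less_minus_ln)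
  also have "\<dots> \<le> - ln (1 - c)"
    using \<open>s \<le> c\<close> c by simp
  finally have "\<forall>\<^sub>F \<beta> in at_right 0. binary_kl \<alpha> s < binary_kl \<beta> c"
    using c by (intro order_tendstoD(1)[OF binary_kl_tendsto_at_right_0])
  moreover have "\<forall>\<^sub>F \<beta> in at_right (0::real). 0 < \<beta>"
    by (rule eventually_at_right_less)
  moreover have "0 < min c B"
    using c p \<alpha> s by (simp add: B_def w_DD_eq s_def c_def)
  then have "\<forall>\<^sub>F \<beta> in at_right 0. \<beta> < min c B"
    by (intro order_tendstoD(2)[OF tendsto_ident_at])
  ultimately have "\<forall>\<^sub>F \<beta> in at_right 0. binary_kl \<alpha> s < binary_kl \<beta> c \<and> 0 < \<beta> \<and> \<beta> < min c B"
    by eventually_elim blast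
  then obtain \<beta> where "binary_kl \<alpha> s < binary_kl \<beta> c" "0 < \<beta>" "\<beta> < c" "\<beta> \<le> B"
    using eventually_happens'[OF trivial_limit_at_right_real] by force
  with assms show ?thesis
    unfolding B_def s_def c_def by (blast intro: DD_objective_le_COMP_objective)
qed

theorem corollary2p14:
  fixes n k :: nat and p \<theta> :: real
  assumes "0 < k" and "k < n"
    and "0 < p" and "p < 1"
    and "0 < \<theta>" and "\<theta> < 1"
  shows "m_COMP n k p \<theta> \<ge> m_DD n k p \<theta>"
  unfolding m_COMP_def m_DD_def
proof (rule ereal_mult_right_mono[OF INF_mono], goal_cases)
  case (1 m)
  then obtain \<alpha> d where m: "m = (\<alpha>, d)" "0 < d" "0 < \<alpha>" "\<alpha> < exp (- d) * (1 - p)"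
    by auto
  with exists_DD_objective_le_COMP_objective[OF assms(3-6) m(2-4)] show ?case
    by force
next
  case 2
  have "1 \<le> real n / real k"
    using assms(1,2) by simp
  then show ?case
    by simp
qed

end
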